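(* Let $f:X\to Y$ be a closed, injective, $SC^*$-irresolute function between topological spaces. If $Y$ is $SC^*$-regular, then $X$ is $SC^*$-regular.
   Context: For $A\subseteq Z$ in a topological space $Z$: $A$ is semi-open if $A\subseteq cl(int(A))$, semi-closed if its complement is semi-open; $scl(A)$ is the smallest semi-closed set containing $A$. $A$ is $c^*$-open if $int(cl(A))\subseteq A\subseteq cl(int(A))$. $A$ is $SC^*$-closed if $scl(A)\subseteq U$ whenever $A\subseteq U$ and $U$ is $c^*$-open; $A$ is $SC^*$-open if $Z\setminus A$ is $SC^*$-closed. $f$ is $SC^*$-irresolute if $f^{-1}(N)$ is $SC^*$-open in $X$ for every $SC^*$-open $N\subseteq Y$. $Z$ is $SC^*$-regular if for every closed set $F$ and every point $x\notin F$ there exist disjoint $SC^*$-open sets $U,V$ with $F\subseteq U$ and $x\in V$. *)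

theory Defs
  imports "HOL-Analysis.Analysis"
begin

definition semi_open :: "'a topology \<Rightarrow> 'a set \<Rightarrow> bool" where
  "semi_open Z A \<longleftrightarrow> A \<subseteq> topspace Z \<and> A \<subseteq> Z closure_of (Z interior_of A)"

definition semi_closed :: "'a topology \<Rightarrow> 'a set \<Rightarrow> bool" where
  "semi_closed Z A \<longleftrightarrow> A \<subseteq> topspace Z \<and> semi_open Z (topspace Z - A)"

definition scl :: "'a topology \<Rightarrow> 'a set \<Rightarrow> 'a set" where
  "scl Z A = topspace Z \<inter> \<Inter> {F. semi_closed Z F \<and> A \<subseteq> F}"

definition cstar_open :: "'a topology \<Rightarrow> 'a set \<Rightarrow> bool" where
  "cstar_open Z A \<longleftrightarrow> A \<subseteq> topspace Z \<and>
     Z interior_of (Z closure_of A) \<subseteq> A \<and> A \<subseteq> Z closure_of (Z interior_of A)"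

definition SCstar_closed :: "'a topology \<Rightarrow> 'a set \<Rightarrow> bool" where
  "SCstar_closed Z A \<longleftrightarrow> A \<subseteq> topspace Z \<and>
     (\<forall>U. cstar_open Z U \<and> A \<subseteq> U \<longrightarrow> scl Z A \<subseteq> U)"

definition SCstar_open :: "'a topology \<Rightarrow> 'a set \<Rightarrow> bool" where
  "SCstar_open Z A \<longleftrightarrow> A \<subseteq> topspace Z \<and> SCstar_closed Z (topspace Z - A)"

definition SCstar_irresolute :: "'a topology \<Rightarrow> 'b topology \<Rightarrow> ('a \<Rightarrow> 'b) \<Rightarrow> bool" where
  "SCstar_irresolute X Y f \<longleftrightarrow>
     (\<forall>N. SCstar_open Y N \<longrightarrow> SCstar_open X {x \<in> topspace X. f x \<in> N})"

definition SCstar_regular :: "'a topology \<Rightarrow> bool" where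
  "SCstar_regular Z \<longleftrightarrow>
     (\<forall>F x. closedin Z F \<and> x \<in> topspace Z \<and> x \<notin> F \<longrightarrow>
        (\<exists>U V. SCstar_open Z U \<and> SCstar_open Z V \<and> U \<inter> V = {} \<and> F \<subseteq> U \<and> x \<in> V))"

end

theory Submission
  imports Defs
begin

lemma SCstar_irresolute_preimage:
  assumes "SCstar_irresolute X Y f" and "SCstar_open Y N"
  shows "SCstar_open X {x \<in> topspace X. f x \<in> N}"
  using assms unfolding SCstar_irresolute_def by blast

lemma SCstar_regularE:
  assumes "SCstar_regular Z" and "closedin Z F" and "x \<in> topspace Z" and "x \<notin> F"
  obtains U V where "SCstar_open Z U" "SCstar_open Z V" "U \<inter> V = {}" "F \<subseteq> U" "x \<in> V"
  using assms unfolding SCstar_regular_def by blast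

lemma SCstar_regularI:
  assumes "\<And>F x. \<lbrakk>closedin Z F; x \<in> topspace Z; x \<notin> F\<rbrakk> \<Longrightarrow>
             \<exists>U V. SCstar_open Z U \<and> SCstar_open Z V \<and> U \<inter> V = {} \<and> F \<subseteq> U \<and> x \<in> V"
  shows "SCstar_regular Z"
  using assms unfolding SCstar_regular_def by blast

lemma closed_map_inj_image_notin:
  assumes "closed_map X Y f" and "inj_on f (topspace X)"
    and "closedin X F" and "x \<in> topspace X" and "x \<notin> F"
  shows "closedin Y (f ` F)" and "f x \<notin> f ` F"
  using assms closedin_subset inj_on_image_mem_iff unfolding closed_map_def by metis+

theorem corollary5p4:
  fixes X :: "'a topology" and Y :: "'b topology" and f :: "'a \<Rightarrow> 'b"
  assumes "f \<in> topspace X \<rightarrow> topspace Y"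
    and "closed_map X Y f"
    and "inj_on f (topspace X)"
    and "SCstar_irresolute X Y f"
    and "SCstar_regular Y"
  shows "SCstar_regular X"
proof (rule SCstar_regularI)
  fix F x
  assume F: "closedin X F" and x: "x \<in> topspace X" "x \<notin> F"
  have "f x \<in> topspace Y"
    using assms(1) x by auto
  moreover note closed_map_inj_image_notin[OF assms(2,3) F x]
  ultimately obtain U V where "SCstar_open Y U" "SCstar_open Y V" "U \<inter> V = {}"
      and FU: "f ` F \<subseteq> U" and xV: "f x \<in> V"
    using assms(5) SCstar_regularE by metis
  then have "SCstar_open X {y \<in> topspace X. f y \<in> U}" "SCstar_open X {y \<in> topspace X. f y \<in> V}"
    using assms(4) SCstar_irresolute_preimage by blast+
  moreover have "F \<subseteq> {y \<in> topspace X. f y \<in> U}"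
    using FU closedin_subset[OF F] by blast
  ultimately show "\<exists>U V. SCstar_open X U \<and> SCstar_open X V \<and> U \<inter> V = {} \<and> F \<subseteq> U \<and> x \<in> V"
    using \<open>U \<inter> V = {}\<close> xV x by blast
qed

end
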